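(* Let $L$ be a positive integer and let $\{a_i(k)\}_{i\in\mathbb Z_L}$, $k\in\mathcal K=\mathbb Z_L$, be binary sequences. Let $2\le s\le S$ be integers and $W(s)\ge0$ such that for all distinct keys $k_1,\ldots,k_s\in\mathcal K$ and all bits $b_1,\ldots,b_s$, $|A_{b_1\ldots b_s}(k_1,\ldots,k_s)|\le L/2^s+W(s)$. Let $0<\gamma<1$ with $\gamma L$ an integer, $L'=L+2^sW(s)$, $\gamma'=\gamma L/L'$. Let $\nu^*_{\rm correct}$ be the optimal value of the linear program in the variables $\nu_0,\ldots,\nu_S\ge0$ subject to $\nu_t=\nu_{S-t}$ for all $t$: $$\text{maximize } \sum_{t=0}^{\lfloor S/2\rfloor}\binom{S-1}{t}\nu_t+\sum_{t=\lfloor S/2\rfloor+1}^{S}\binom{S-1}{t-1}\nu_t$$ $$\text{subject to } \sum_{t=0}^{S}\binom{S}{t}\nu_t=\gamma',\qquad \sum_{t=0}^{S-s}\binom{S-s}{t}\nu_{h+t}\le 2^{-s}\ \ (h=0,\ldots,s).$$ Then for every $T\subset\mathbb Z_L$ with $|T|=\gamma L$, every $g:T\to\{0,1\}$ and every $S$ distinct keys $k_1,\ldots,k_S$, $$\min_{1\le i\le S}\bigl|\{j\in T: g(j)=a_j(k_i)\}\bigr|\le n_{\rm correct}(\gamma,\varepsilon):=\nu^*_{\rm correct}L',$$ with $\varepsilon=S/|\mathcal K|$. Consequently, fewer than $S$ keys $k$ satisfy $|\{j\in T:g(j)=a_j(k)\}|>\nu^*_{\rm correct}L'$, so for a uniformly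 random key the number of correctly guessed bits does not exceed $\nu^*_{\rm correct}L'$ with probability at least $1-\varepsilon$.
   Context: $\mathbb Z_L=\{0,\ldots,L-1\}$ is the residue ring modulo $L$. For distinct keys $k_1,\ldots,k_s$ and bits $b_1,\ldots,b_s$, $A_{b_1\ldots b_s}(k_1,\ldots,k_s)=\{i\in\mathbb Z_L: a_i(k_1)=b_1,\ldots,a_i(k_s)=b_s\}$. *)

theory Defs
  imports Complex_Main
begin

text \<open>Sequences: a k i is the bit a_i(k) for key k and index i in Z_L = {0..<L}.
  Bits are booleans.  A_{b_1..b_s}(k_1..k_s), keys and bits indexed by 0..s-1.\<close>
definition A_set :: "nat \<Rightarrow> (nat \<Rightarrow> nat \<Rightarrow> bool) \<Rightarrow> nat \<Rightarrow> (nat \<Rightarrow> nat) \<Rightarrow> (nat \<Rightarrow> bool) \<Rightarrow> nat set" where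
  "A_set L a s ks bs = {i. i < L \<and> (\<forall>j<s. a (ks j) i = bs j)}"

definition lp_feasible :: "nat \<Rightarrow> nat \<Rightarrow> real \<Rightarrow> (nat \<Rightarrow> real) \<Rightarrow> bool" where
  "lp_feasible S s gam' nu \<longleftrightarrow>
     (\<forall>t\<le>S. nu t \<ge> 0) \<and>
     (\<forall>t\<le>S. nu t = nu (S - t)) \<and>
     (\<Sum>t=0..S. real (S choose t) * nu t) = gam' \<and>
     (\<forall>h\<le>s. (\<Sum>t=0..S-s. real ((S - s) choose t) * nu (h + t)) \<le> 1 / 2 ^ s)"

definition lp_objective :: "nat \<Rightarrow> (nat \<Rightarrow> real) \<Rightarrow> real" where
  "lp_objective S nu =
     (\<Sum>t=0..S div 2. real ((S - 1) choose t) * nu t) +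
     (\<Sum>t=S div 2 + 1..S. real ((S - 1) choose (t - 1)) * nu t)"

text \<open>Optimal value nu*_correct of the LP (supremum of the objective over the feasible set;
  the LP is feasible and bounded, so this is the optimum).\<close>
definition nu_correct :: "nat \<Rightarrow> nat \<Rightarrow> real \<Rightarrow> real" where
  "nu_correct S s gam' = Sup (lp_objective S ` {nu. lp_feasible S s gam' nu})"

definition n_agree :: "(nat \<Rightarrow> nat \<Rightarrow> bool) \<Rightarrow> nat set \<Rightarrow> (nat \<Rightarrow> bool) \<Rightarrow> nat \<Rightarrow> nat" where
  "n_agree a T g k = card {j \<in> T. g j = a k j}"

end

theory Submission
  imports Defs
begin

text \<open>For a position j of T let w j be the number of the S keys whose bit at j is set. The
  guess g j agrees with at most max (w j) (S - w j) of them, so S times the least agreement is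
  at most the sum of these maxima. The histogram of the w j, symmetrised under w \<mapsto> S - w and
  scaled by 2 L' (S choose t), is a feasible point of the LP whose objective is exactly that sum
  divided by S L'. Feasibility is a double count over s-sets P of keys: the positions at which
  exactly h keys of P have bit 1 fall into (s choose h) bit patterns on P, each occurring at most
  L / 2^s + W times by hypothesis.\<close>

lemma choose_mult_swap:
  fixes N x y :: nat
  assumes "x + y \<le> N"
  shows "(N choose x) * ((N - x) choose y) = (N choose y) * ((N - y) choose x)"
proof -
  have "(N choose x) * ((N - x) choose y) = (N choose (x + y)) * ((x + y) choose x)"
    using choose_mult[of x "x + y" N] assms by simp
  also have "((x + y) choose x) = ((x + y) choose y)"
    using binomial_symmetric[of x "x + y"] by simp
  also have "(N choose (x + y)) * \<dots> = (N choose y) * ((N - y) choose x)"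
    using choose_mult[of y "x + y" N] assms by simp
  finally show ?thesis .
qed

lemma choose_window_identity:
  fixes S s h w :: nat
  assumes "h \<le> s" "s \<le> S" "w \<le> S"
  shows "(if h \<le> w \<and> w - h \<le> S - s then (S - s) choose (w - h) else 0) * (S choose s) * (s choose h)
       = (w choose h) * ((S - w) choose (s - h)) * (S choose w)"
proof (cases "h \<le> w \<and> w - h \<le> S - s")
  case True
  have "(S choose s) * (s choose h) = (S choose h) * ((S - h) choose (s - h))"
    using choose_mult[of h s S] assms by simp
  moreover have "(S choose w) * (w choose h) = (S choose h) * ((S - h) choose (w - h))"
    using choose_mult[of h w S] assms True by simp
  moreover have "((S - h) choose (s - h)) * ((S - s) choose (w - h))
               = ((S - h) choose (w - h)) * ((S - w) choose (s - h))"
  proof -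
    have "s - h + (w - h) \<le> S - h" "S - h - (s - h) = S - s" "S - h - (w - h) = S - w"
      using assms True by auto
    then show ?thesis using choose_mult_swap[of "s - h" "w - h" "S - h"] by simp
  qed
  ultimately show ?thesis
    using True by (simp add: algebra_simps) (metis mult.assoc mult.commute)
next
  case False
  then have "w < h \<or> S - w < s - h" using assms by auto
  then show ?thesis using False by auto
qed

lemma card_subsets_with_card_inter:
  assumes "finite U" "Z \<subseteq> U" "h \<le> s"
  shows "card {P. P \<subseteq> U \<and> card P = s \<and> card (P \<inter> Z) = h}
       = (card Z choose h) * ((card U - card Z) choose (s - h))"
proof -
  let ?A = "{P. P \<subseteq> U \<and> card P = s \<and> card (P \<inter> Z) = h}"
  let ?B = "{X. X \<subseteq> Z \<and> card X = h} \<times> {Y. Y \<subseteq> U - Z \<and> card Y = s - h}"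
  have fZ: "finite Z" using assms finite_subset by blast
  have bij: "bij_betw (\<lambda>P. (P \<inter> Z, P - Z)) ?A ?B"
  proof (rule bij_betw_byWitness[where f' = "\<lambda>(X,Y). X \<union> Y"])
    show "\<forall>a\<in>?A. (case (a \<inter> Z, a - Z) of (X, Y) \<Rightarrow> X \<union> Y) = a" by auto
    show "\<forall>a'\<in>?B. ((case a' of (X, Y) \<Rightarrow> X \<union> Y) \<inter> Z, (case a' of (X, Y) \<Rightarrow> X \<union> Y) - Z) = a'"
      by auto
    show "(\<lambda>P. (P \<inter> Z, P - Z)) ` ?A \<subseteq> ?B"
    proof (rule image_subsetI)
      fix P assume "P \<in> ?A"
      then have P: "P \<subseteq> U" "h = card (P \<inter> Z)" "s = card P" by auto
      have "finite P" using P assms finite_subset by blast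
      have "card P = card (P \<inter> Z) + card (P - Z)"
        using card_Int_Diff[OF \<open>finite P\<close>, of Z] by simp
      then have "card (P - Z) = s - h" using P by simp
      then show "(P \<inter> Z, P - Z) \<in> ?B" using P by auto
    qed
    show "(\<lambda>(X, Y). X \<union> Y) ` ?B \<subseteq> ?A"
    proof (rule image_subsetI)
      fix XY assume "XY \<in> ?B"
      then obtain X Y where XY: "XY = (X,Y)" and X: "X \<subseteq> Z" "h = card X" "Y \<subseteq> U - Z" "card Y = s - card X" by auto
      have fX: "finite X" using X fZ finite_subset by blast
      have fY: "finite Y" using X assms finite_subset by blast
      have d: "X \<inter> Y = {}" using X by blast
      have "(X \<union> Y) \<inter> Z = X" using X by blast
      then show "(\<lambda>(X, Y). X \<union> Y) XY \<in> ?A"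
        using X XY assms card_Un_disjoint[OF fX fY d] by auto
    qed
  qed
  have "card ?A = card ?B" using bij_betw_same_card[OF bij] .
  also have "\<dots> = (card Z choose h) * (card (U - Z) choose (s - h))"
    using n_subsets[OF fZ] n_subsets[of "U - Z"] assms by (simp add: card_cartesian_product)
  also have "card (U - Z) = card U - card Z" using assms fZ by (simp add: card_Diff_subset)
  finally show ?thesis .
qed

lemma sum_card_filter_swap:
  assumes "finite A" "finite B"
  shows "(\<Sum>x\<in>A. card {y\<in>B. R x y}) = (\<Sum>y\<in>B. card {x\<in>A. R x y})"
proof -
  have card_eq: "\<And>C Q. finite C \<Longrightarrow> card {z\<in>C. Q z} = (\<Sum>z\<in>C. if Q z then 1 else 0)"
    by (simp add: sum.inter_filter[symmetric])
  show ?thesis using assms by (simp add: card_eq sum.swap[of _ A])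
qed

definition weight_profile :: "nat \<Rightarrow> real \<Rightarrow> 'j set \<Rightarrow> ('j \<Rightarrow> nat) \<Rightarrow> nat \<Rightarrow> real" where
  "weight_profile S L' T w t =
     (\<Sum>j\<in>T. of_bool (w j = t) + of_bool (w j = S - t)) / (2 * L' * real (S choose t))"

lemma sum_weight_profile:
  assumes T: "finite T" "\<forall>j\<in>T. w j \<le> S" and L': "L' \<noteq> 0"
  shows "(\<Sum>t=0..S. f t * (real (S choose t) * weight_profile S L' T w t))
       = (\<Sum>j\<in>T. f (w j) + f (S - w j)) / (2 * L')"
proof -
  have "(\<Sum>t=0..S. f t * (real (S choose t) * weight_profile S L' T w t))
      = (\<Sum>t=0..S. (\<Sum>j\<in>T. (if w j = t then f t else 0) + (if t = S - w j then f t else 0)) / (2 * L'))"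
  proof (rule sum.cong[OF refl])
    fix t assume t: "t \<in> {0..S}"
    have "(\<Sum>j\<in>T. of_bool (w j = t) + of_bool (w j = S - t))
        = (\<Sum>j\<in>T. of_bool (w j = t) + of_bool (t = S - w j) :: real)"
      using T t by (intro sum.cong) auto
    moreover have "real (S choose t) \<noteq> 0" using t by simp
    ultimately have "real (S choose t) * weight_profile S L' T w t
        = (\<Sum>j\<in>T. of_bool (w j = t) + of_bool (t = S - w j)) / (2 * L')"
      by (simp add: weight_profile_def)
    then show "f t * (real (S choose t) * weight_profile S L' T w t)
             = (\<Sum>j\<in>T. (if w j = t then f t else 0) + (if t = S - w j then f t else 0)) / (2 * L')"
      by (auto simp: sum_distrib_left ring_distribs of_bool_def intro!: sum.cong)
  qed
  also have "\<dots> = (\<Sum>t=0..S. \<Sum>j\<in>T. (if w j = t then f t else 0) + (if t = S - w j then f t else 0)) / (2 * L')"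
    by (simp add: sum_divide_distrib)
  also have "\<dots> = (\<Sum>j\<in>T. \<Sum>t=0..S. (if w j = t then f t else 0) + (if t = S - w j then f t else 0)) / (2 * L')"
    by (subst sum.swap) (rule refl)
  also have "\<dots> = (\<Sum>j\<in>T. f (w j) + f (S - w j)) / (2 * L')"
    using T by (simp add: sum.distrib sum.delta sum.delta')
  finally show ?thesis .
qed

lemma weight_profile_symmetric:
  assumes "\<forall>j\<in>T. w j \<le> S" "t \<le> S"
  shows "weight_profile S L' T w (S - t) = weight_profile S L' T w t"
proof -
  have "(\<Sum>j\<in>T. of_bool (w j = S - t) + of_bool (w j = S - (S - t)))
      = (\<Sum>j\<in>T. of_bool (w j = t) + of_bool (w j = S - t) :: real)"
    using assms by (intro sum.cong) auto
  then show ?thesis using assms by (simp add: weight_profile_def binomial_symmetric[symmetric])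
qed

lemma lp_objective_eq_sum:
  assumes "0 < S"
  shows "lp_objective S nu = (\<Sum>t=0..S. real (max t (S - t)) / real S * (real (S choose t) * nu t))"
proof -
  have coeff_nat: "max t (S - t) * (S choose t)
                 = S * (if t \<le> S div 2 then (S - 1) choose t else (S - 1) choose (t - 1))" for t
  proof (cases "t \<le> S div 2")
    case True
    then have "max t (S - t) = S - t" by auto
    then show ?thesis using True binomial_absorb_comp[of S t] by simp
  next
    case False
    then have "t = Suc (t - 1)" "max t (S - t) = t" by auto
    then show ?thesis using False binomial_absorption[of "t - 1" S] by simp
  qed
  have coeff: "real (max t (S - t)) / real S * real (S choose t)
             = real (if t \<le> S div 2 then (S - 1) choose t else (S - 1) choose (t - 1))" for t
  proof -
    have cancel: "a / real S * b = c" if "a * b = real S * c" for a b c :: real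
      using that assms by (simp add: field_simps)
    show ?thesis by (rule cancel) (metis coeff_nat of_nat_mult)
  qed
  have halves: "{0..S} = {0..S div 2} \<union> {S div 2 + 1..S}" by auto
  have "(\<Sum>t=0..S. real (max t (S - t)) / real S * (real (S choose t) * nu t))
      = (\<Sum>t=0..S. real (if t \<le> S div 2 then (S - 1) choose t else (S - 1) choose (t - 1)) * nu t)"
    by (simp only: mult.assoc[symmetric] coeff)
  also have "\<dots> = lp_objective S nu"
    unfolding lp_objective_def halves by (subst sum.union_disjoint) (auto intro!: arg_cong2[where f = "(+)"] sum.cong)
  finally show ?thesis by simp
qed

lemma lp_objective_le_nu_correct:
  assumes "0 < S" "lp_feasible S s \<gamma>' nu"
  shows "lp_objective S nu \<le> nu_correct S s \<gamma>'"
  unfolding nu_correct_def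
proof (rule cSup_upper)
  show "lp_objective S nu \<in> lp_objective S ` {nu. lp_feasible S s \<gamma>' nu}" using assms(2) by blast
  show "bdd_above (lp_objective S ` {nu. lp_feasible S s \<gamma>' nu})"
  proof (rule bdd_aboveI2)
    fix nu' assume "nu' \<in> {nu. lp_feasible S s \<gamma>' nu}"
    then have nonneg: "\<forall>t\<le>S. 0 \<le> nu' t" and mass: "(\<Sum>t=0..S. real (S choose t) * nu' t) = \<gamma>'"
      unfolding lp_feasible_def mem_Collect_eq by blast+
    have "lp_objective S nu' = (\<Sum>t=0..S. real (max t (S - t)) / real S * (real (S choose t) * nu' t))"
      using assms(1) by (rule lp_objective_eq_sum)
    also have "\<dots> \<le> (\<Sum>t=0..S. 1 * (real (S choose t) * nu' t))"
    proof (intro sum_mono mult_right_mono)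
      fix t assume "t \<in> {0..S}"
      then show "real (max t (S - t)) / real S \<le> 1" "0 \<le> real (S choose t) * nu' t"
        using nonneg assms(1) by auto
    qed
    finally show "lp_objective S nu' \<le> \<gamma>'" using mass by simp
  qed
qed

lemma window_coefficient_eq:
  assumes h: "h \<le> s" and s: "s \<le> S" and u: "u \<le> S"
  shows "(if h \<le> u \<and> u - h \<le> S - s then real ((S - s) choose (u - h)) / real (S choose u) else 0)
       = real ((u choose h) * ((S - u) choose (s - h))) / (real (S choose s) * real (s choose h))"
proof -
  let ?X = "real (if h \<le> u \<and> u - h \<le> S - s then (S - s) choose (u - h) else 0)"
  have cross: "x / c = y / d" if "x * d = y * c" "c \<noteq> 0" "d \<noteq> 0" for x y c d :: real
    using that by (simp add: field_simps)
  have "(if h \<le> u \<and> u - h \<le> S - s then real ((S - s) choose (u - h)) / real (S choose u) else 0)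
      = ?X / real (S choose u)" by simp
  also have "\<dots> = real ((u choose h) * ((S - u) choose (s - h))) / (real (S choose s) * real (s choose h))"
  proof (rule cross)
    show "?X * (real (S choose s) * real (s choose h))
        = real ((u choose h) * ((S - u) choose (s - h))) * real (S choose u)"
      by (simp only: of_nat_mult[symmetric] mult.assoc[symmetric] choose_window_identity[OF h s u])
  qed (use h s u in simp_all)
  finally show ?thesis .
qed

lemma sum_window_eq:
  fixes nu :: "nat \<Rightarrow> real"
  assumes h: "h \<le> s" and s: "s \<le> S"
  shows "(\<Sum>t=0..S-s. real ((S - s) choose t) * nu (h + t))
       = (\<Sum>u=0..S. real ((u choose h) * ((S - u) choose (s - h))) / (real (S choose s) * real (s choose h))
                    * (real (S choose u) * nu u))"
proof -
  have "(\<Sum>t=0..S-s. real ((S - s) choose t) * nu (h + t))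
      = (\<Sum>u=h..h + (S - s). real ((S - s) choose (u - h)) * nu u)"
    using sum.shift_bounds_cl_nat_ivl[of "\<lambda>u. real ((S - s) choose (u - h)) * nu u" 0 h "S - s"]
    by (simp add: add.commute)
  also have "\<dots> = (\<Sum>u=0..S. if u \<in> {h..h + (S - s)} then real ((S - s) choose (u - h)) * nu u else 0)"
    using h s by (subst sum.inter_restrict[symmetric]) (auto intro!: sum.cong)
  also have "\<dots> = (\<Sum>u=0..S. (if h \<le> u \<and> u - h \<le> S - s then real ((S - s) choose (u - h)) / real (S choose u) else 0)
                    * (real (S choose u) * nu u))"
    by (intro sum.cong) auto
  also have "\<dots> = (\<Sum>u=0..S. real ((u choose h) * ((S - u) choose (s - h))) / (real (S choose s) * real (s choose h))
                    * (real (S choose u) * nu u))"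
    using window_coefficient_eq[OF h s] by (intro sum.cong) auto
  finally show ?thesis .
qed

lemma lp_feasible_weight_profile:
  assumes T: "finite T" "\<forall>j\<in>T. w j \<le> S" and L': "0 < L'" and s: "s \<le> S"
    and count: "\<And>h. h \<le> s \<Longrightarrow>
      real (\<Sum>j\<in>T. (w j choose h) * ((S - w j) choose (s - h))) \<le> real (S choose s) * real (s choose h) * L' / 2 ^ s"
  shows "lp_feasible S s (real (card T) / L') (weight_profile S L' T w)"
  unfolding lp_feasible_def
proof (intro conjI allI impI)
  let ?nu = "weight_profile S L' T w"
  show "0 \<le> ?nu t" for t
    using L' by (simp add: weight_profile_def sum_nonneg)
  show "?nu t = ?nu (S - t)" if "t \<le> S" for t
    using weight_profile_symmetric[OF T(2) that] by simp
  show "(\<Sum>t=0..S. real (S choose t) * ?nu t) = real (card T) / L'"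
    using sum_weight_profile[OF T, of L' "\<lambda>_. 1"] L' by simp
  fix h assume h: "h \<le> s"
  define D where "D = real (S choose s) * real (s choose h)"
  have D: "0 < D" using h s by (simp add: D_def)
  have count': "real (\<Sum>j\<in>T. (w j choose (s - h)) * ((S - w j) choose h)) \<le> D * L' / 2 ^ s"
    using count[of "s - h"] h by (simp add: D_def binomial_symmetric[OF h, symmetric])
  have "(\<Sum>t=0..S-s. real ((S - s) choose t) * ?nu (h + t))
      = (\<Sum>j\<in>T. real ((w j choose h) * ((S - w j) choose (s - h))) / D
                + real (((S - w j) choose h) * ((S - (S - w j)) choose (s - h))) / D) / (2 * L')"
    unfolding sum_window_eq[OF h s] D_def by (rule sum_weight_profile[OF T]) (use L' in simp)
  also have "\<dots> = (real (\<Sum>j\<in>T. (w j choose h) * ((S - w j) choose (s - h)))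
                  + real (\<Sum>j\<in>T. (w j choose (s - h)) * ((S - w j) choose h))) / (2 * L' * D)"
    using T D by (simp add: sum.distrib sum_divide_distrib add_divide_distrib mult.commute)
  also have "\<dots> \<le> (D * L' / 2 ^ s + D * L' / 2 ^ s) / (2 * L' * D)"
    using count[OF h] count' D L' by (intro divide_right_mono add_mono) (simp_all add: D_def)
  also have "\<dots> = 1 / 2 ^ s" using D L' by (simp add: field_simps)
  finally show "(\<Sum>t=0..S-s. real ((S - s) choose t) * ?nu (h + t)) \<le> 1 / 2 ^ s" .
qed

lemma lp_objective_weight_profile:
  assumes T: "finite T" "\<forall>j\<in>T. w j \<le> S" and L': "L' \<noteq> 0" and S: "0 < S"
  shows "lp_objective S (weight_profile S L' T w) = (\<Sum>j\<in>T. real (max (w j) (S - w j))) / (real S * L')"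
proof -
  let ?f = "\<lambda>t. real (max t (S - t)) / real S"
  have "lp_objective S (weight_profile S L' T w) = (\<Sum>j\<in>T. ?f (w j) + ?f (S - w j)) / (2 * L')"
    unfolding lp_objective_eq_sum[OF S] by (rule sum_weight_profile[OF T L'])
  also have "\<dots> = (\<Sum>j\<in>T. 2 * real (max (w j) (S - w j))) / (2 * L' * real S)"
    using T(2) by (simp add: sum_divide_distrib max.commute mult.commute)
  finally show ?thesis by (simp add: sum_distrib_left[symmetric] mult.commute)
qed

definition keys_with_bit :: "(nat \<Rightarrow> nat \<Rightarrow> bool) \<Rightarrow> (nat \<Rightarrow> nat) \<Rightarrow> nat \<Rightarrow> nat \<Rightarrow> nat set" where
  "keys_with_bit a ks S j = {i\<in>{..<S}. a (ks i) j}"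

lemma card_keys_with_bit_le: "card (keys_with_bit a ks S j) \<le> S"
  using card_mono[of "{..<S}" "keys_with_bit a ks S j"] by (auto simp: keys_with_bit_def)

lemma card_agree_le_max:
  "card {i\<in>{..<S}. g j = a (ks i) j}
     \<le> max (card (keys_with_bit a ks S j)) (S - card (keys_with_bit a ks S j))"
proof (cases "g j")
  case True
  then show ?thesis by (simp add: keys_with_bit_def)
next
  case False
  then have "{i\<in>{..<S}. g j = a (ks i) j} = {..<S} - keys_with_bit a ks S j"
    by (auto simp: keys_with_bit_def)
  moreover have "keys_with_bit a ks S j \<subseteq> {..<S}" by (auto simp: keys_with_bit_def)
  ultimately have "card {i\<in>{..<S}. g j = a (ks i) j} = S - card (keys_with_bit a ks S j)"
    by (metis card_Diff_subset card_lessThan finite_lessThan finite_subset)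
  then show ?thesis by simp
qed

lemma Min_n_agree_le_sum_max:
  assumes "finite T"
  shows "real S * real (Min (n_agree a T g ` ks ` {..<S}))
       \<le> (\<Sum>j\<in>T. real (max (card (keys_with_bit a ks S j)) (S - card (keys_with_bit a ks S j))))"
proof -
  let ?M = "Min (n_agree a T g ` ks ` {..<S})"
  have "real S * real ?M = (\<Sum>i\<in>{..<S}. real ?M)" by simp
  also have "\<dots> \<le> (\<Sum>i\<in>{..<S}. real (n_agree a T g (ks i)))"
    by (intro sum_mono of_nat_mono Min_le) auto
  also have "\<dots> = real (\<Sum>j\<in>T. card {i\<in>{..<S}. g j = a (ks i) j})"
    unfolding n_agree_def of_nat_sum[symmetric]
    using sum_card_filter_swap[of "{..<S}" T "\<lambda>i j. g j = a (ks i) j"] assms by simp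
  also have "\<dots> \<le> (\<Sum>j\<in>T. real (max (card (keys_with_bit a ks S j)) (S - card (keys_with_bit a ks S j))))"
    unfolding of_nat_sum by (intro sum_mono of_nat_mono card_agree_le_max)
  finally show ?thesis .
qed

locale bit_patterns_bounded =
  fixes L :: nat and a :: "nat \<Rightarrow> nat \<Rightarrow> bool" and s :: nat and W :: real
  assumes pattern_bound: "\<And>kk bs. inj_on kk {..<s} \<Longrightarrow> (\<forall>j<s. kk j < L) \<Longrightarrow>
                  real (card (A_set L a s kk bs)) \<le> real L / 2 ^ s + W"
begin

lemma card_positions_with_pattern_le:
  assumes T: "T \<subseteq> {..<L}" and ks: "inj_on ks {..<S}" "\<forall>i<S. ks i < L"
    and P: "P \<subseteq> {..<S}" "card P = s"
  shows "real (card {j\<in>T. P \<inter> keys_with_bit a ks S j = B}) \<le> real L / 2 ^ s + W"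
proof -
  have "finite P" using P(1) finite_subset by blast
  then obtain f where f: "bij_betw f {..<s} P"
    using ex_bij_betw_nat_finite[of P] P(2) by (auto simp: atLeast0LessThan)
  then have f_inj: "inj_on f {..<s}" and f_img: "f ` {..<s} = P" by (auto simp: bij_betw_def)
  have inj: "inj_on (ks \<circ> f) {..<s}"
    using f_inj f_img inj_on_subset[OF ks(1) P(1)] by (simp add: comp_inj_on)
  have range: "\<forall>l<s. (ks \<circ> f) l < L" using f_img P(1) ks(2) by auto
  have "{j\<in>T. P \<inter> keys_with_bit a ks S j = B} \<subseteq> A_set L a s (ks \<circ> f) (\<lambda>l. f l \<in> B)"
  proof
    fix j assume j: "j \<in> {j\<in>T. P \<inter> keys_with_bit a ks S j = B}"
    have "a (ks (f l)) j = (f l \<in> B)" if "l < s" for l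
    proof -
      have "f l \<in> P" "f l < S" using f_img P(1) that by auto
      then show ?thesis using j by (auto simp: keys_with_bit_def)
    qed
    then show "j \<in> A_set L a s (ks \<circ> f) (\<lambda>l. f l \<in> B)"
      using j T by (auto simp: A_set_def)
  qed
  then have "card {j\<in>T. P \<inter> keys_with_bit a ks S j = B} \<le> card (A_set L a s (ks \<circ> f) (\<lambda>l. f l \<in> B))"
    by (rule card_mono[rotated]) (auto simp: A_set_def)
  then show ?thesis using pattern_bound[OF inj range] by (meson of_nat_le_iff order_trans)
qed

lemma card_positions_with_ones_le:
  assumes T: "T \<subseteq> {..<L}" and ks: "inj_on ks {..<S}" "\<forall>i<S. ks i < L"
    and P: "P \<subseteq> {..<S}" "card P = s"
  shows "real (card {j\<in>T. card (P \<inter> keys_with_bit a ks S j) = h}) \<le> real (s choose h) * (real L / 2 ^ s + W)"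
proof -
  let ?Bs = "{B. B \<subseteq> P \<and> card B = h}"
  have fP: "finite P" using P(1) finite_subset by blast
  have fT: "finite T" using T finite_subset by blast
  have "{j\<in>T. card (P \<inter> keys_with_bit a ks S j) = h} \<subseteq> (\<Union>B\<in>?Bs. {j\<in>T. P \<inter> keys_with_bit a ks S j = B})"
    by blast
  then have "card {j\<in>T. card (P \<inter> keys_with_bit a ks S j) = h}
           \<le> card (\<Union>B\<in>?Bs. {j\<in>T. P \<inter> keys_with_bit a ks S j = B})"
    by (rule card_mono[rotated]) (rule finite_subset[OF _ fT], blast)
  also have "\<dots> \<le> (\<Sum>B\<in>?Bs. card {j\<in>T. P \<inter> keys_with_bit a ks S j = B})"
    using fP by (intro card_UN_le) simp
  finally have "real (card {j\<in>T. card (P \<inter> keys_with_bit a ks S j) = h})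
              \<le> (\<Sum>B\<in>?Bs. real (card {j\<in>T. P \<inter> keys_with_bit a ks S j = B}))"
    by (simp flip: of_nat_sum)
  also have "\<dots> \<le> (\<Sum>B\<in>?Bs. real L / 2 ^ s + W)"
    by (intro sum_mono card_positions_with_pattern_le[OF T ks P])
  also have "\<dots> = real (s choose h) * (real L / 2 ^ s + W)"
    using n_subsets[OF fP, of h] P(2) by simp
  finally show ?thesis .
qed

lemma sum_choose_ones_le:
  assumes T: "T \<subseteq> {..<L}" and ks: "inj_on ks {..<S}" "\<forall>i<S. ks i < L"
    and h: "h \<le> s" and s: "s \<le> S"
  shows "real (\<Sum>j\<in>T. (card (keys_with_bit a ks S j) choose h) * ((S - card (keys_with_bit a ks S j)) choose (s - h)))
       \<le> real (S choose s) * real (s choose h) * (real L / 2 ^ s + W)"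
proof -
  let ?K = "keys_with_bit a ks S"
  let ?Ps = "{P. P \<subseteq> {..<S} \<and> card P = s}"
  have fT: "finite T" using T finite_subset by blast
  have "(\<Sum>j\<in>T. (card (?K j) choose h) * ((S - card (?K j)) choose (s - h)))
      = (\<Sum>j\<in>T. card {P\<in>?Ps. card (P \<inter> ?K j) = h})"
  proof (rule sum.cong[OF refl])
    fix j
    have "?K j \<subseteq> {..<S}" by (auto simp: keys_with_bit_def)
    then show "(card (?K j) choose h) * ((S - card (?K j)) choose (s - h)) = card {P\<in>?Ps. card (P \<inter> ?K j) = h}"
      using card_subsets_with_card_inter[of "{..<S}" "?K j" h s] h by (simp add: conj_assoc)
  qed
  also have "\<dots> = (\<Sum>P\<in>?Ps. card {j\<in>T. card (P \<inter> ?K j) = h})"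
    using fT by (intro sum_card_filter_swap) auto
  finally have "real (\<Sum>j\<in>T. (card (?K j) choose h) * ((S - card (?K j)) choose (s - h)))
              = (\<Sum>P\<in>?Ps. real (card {j\<in>T. card (P \<inter> ?K j) = h}))"
    by simp
  also have "\<dots> \<le> (\<Sum>P\<in>?Ps. real (s choose h) * (real L / 2 ^ s + W))"
    by (intro sum_mono card_positions_with_ones_le[OF T ks]) auto
  also have "\<dots> = real (S choose s) * real (s choose h) * (real L / 2 ^ s + W)"
    using n_subsets[of "{..<S}" s] by simp
  finally show ?thesis .
qed

theorem Min_n_agree_le_nu_correct:
  assumes L: "0 < L" and W: "0 \<le> W" and S: "0 < S" and s: "s \<le> S"
    and T: "T \<subseteq> {..<L}" and ks: "inj_on ks {..<S}" "\<forall>i<S. ks i < L"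
  shows "real (Min (n_agree a T g ` ks ` {..<S}))
       \<le> nu_correct S s (real (card T) / (real L + 2 ^ s * W)) * (real L + 2 ^ s * W)"
proof -
  define L' where "L' = real L + 2 ^ s * W"
  define w where "w j = card (keys_with_bit a ks S j)" for j
  have L': "0 < L'" using L W by (simp add: L'_def add_pos_nonneg)
  have fT: "finite T" using T finite_subset by blast
  have w: "\<forall>j\<in>T. w j \<le> S" by (simp add: w_def card_keys_with_bit_le)
  have feasible: "lp_feasible S s (real (card T) / L') (weight_profile S L' T w)"
  proof (rule lp_feasible_weight_profile[OF fT w L' s])
    fix h assume "h \<le> s"
    moreover have "real L / 2 ^ s + W = L' / 2 ^ s" by (simp add: L'_def field_simps)
    ultimately show "real (\<Sum>j\<in>T. (w j choose h) * ((S - w j) choose (s - h)))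
                   \<le> real (S choose s) * real (s choose h) * L' / 2 ^ s"
      using sum_choose_ones_le[OF T ks _ s] by (simp add: w_def)
  qed
  have "real S * real (Min (n_agree a T g ` ks ` {..<S})) \<le> (\<Sum>j\<in>T. real (max (w j) (S - w j)))"
    unfolding w_def by (rule Min_n_agree_le_sum_max[OF fT])
  also have "\<dots> = real S * (lp_objective S (weight_profile S L' T w) * L')"
    using lp_objective_weight_profile[OF fT w _ S, of L'] L' S by simp
  also have "\<dots> \<le> real S * (nu_correct S s (real (card T) / L') * L')"
    using lp_objective_le_nu_correct[OF S feasible] L' by (intro mult_left_mono mult_right_mono) auto
  finally show ?thesis using S by (simp add: L'_def)
qed

end

lemma card_exceeding_less:
  fixes f :: "nat \<Rightarrow> nat"
  assumes S: "0 < S"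
    and Min_le: "\<And>ks. inj_on ks {..<S} \<Longrightarrow> \<forall>i<S. ks i < L \<Longrightarrow> real (Min (f ` ks ` {..<S})) \<le> n"
  shows "card {k. k < L \<and> real (f k) > n} < S"
proof (rule ccontr)
  let ?K = "{k. k < L \<and> real (f k) > n}"
  assume "\<not> card ?K < S"
  then obtain ks where ks: "ks ` {..<S} \<subseteq> ?K" "inj_on ks {..<S}"
    using card_le_inj[of "{..<S}" ?K] by auto
  have "Min (f ` ks ` {..<S}) \<in> f ` ks ` {..<S}" using S by (intro Min_in) auto
  then obtain i where "i < S" "Min (f ` ks ` {..<S}) = f (ks i)" by auto
  moreover have "\<forall>i<S. ks i < L" using ks(1) by auto
  ultimately have "real (f (ks i)) \<le> n" using Min_le[OF ks(2)] by simp
  moreover have "real (f (ks i)) > n" using ks(1) \<open>i < S\<close> by auto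
  ultimately show False by simp
qed

theorem corollary2:
  fixes L s S :: nat and a :: "nat \<Rightarrow> nat \<Rightarrow> bool" and W \<gamma> :: real
    and T :: "nat set" and g :: "nat \<Rightarrow> bool" and ks :: "nat \<Rightarrow> nat"
  assumes L_pos: "0 < L"
    and s_ge: "2 \<le> s" and s_le: "s \<le> S"
    and W_nonneg: "0 \<le> W"
    and bound: "\<And>kk bs. inj_on kk {..<s} \<Longrightarrow> (\<forall>j<s. kk j < L) \<Longrightarrow>
                  real (card (A_set L a s kk bs)) \<le> real L / 2 ^ s + W"
    and gam: "0 < \<gamma>" "\<gamma> < 1" "\<gamma> * real L \<in> \<int>"
    and T: "T \<subseteq> {..<L}" "real (card T) = \<gamma> * real L"
    and ks: "inj_on ks {..<S}" "\<forall>i<S. ks i < L"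
  shows "let L' = real L + 2 ^ s * W; \<gamma>' = \<gamma> * real L / L'; \<epsilon> = real S / real L;
             n = nu_correct S s \<gamma>' * L' in
           real (Min (n_agree a T g ` ks ` {..<S})) \<le> n \<and>
           card {k. k < L \<and> real (n_agree a T g k) > n} < S \<and>
           real (card {k. k < L \<and> real (n_agree a T g k) \<le> n}) / real L \<ge> 1 - \<epsilon>"
proof -
  interpret bit_patterns_bounded L a s W using bound by unfold_locales
  define n where "n = nu_correct S s (\<gamma> * real L / (real L + 2 ^ s * W)) * (real L + 2 ^ s * W)"
  have Min_le: "real (Min (n_agree a T g ` ks' ` {..<S})) \<le> n"
    if "inj_on ks' {..<S}" "\<forall>i<S. ks' i < L" for ks'
    using Min_n_agree_le_nu_correct[OF L_pos W_nonneg _ s_le T(1) that] s_ge s_le T(2) by (simp add: n_def)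
  let ?exceeding = "{k. k < L \<and> real (n_agree a T g k) > n}"
  let ?within = "{k. k < L \<and> real (n_agree a T g k) \<le> n}"
  have fewer: "card ?exceeding < S"
    using s_ge s_le Min_le by (intro card_exceeding_less) auto
  have "?within = {..<L} - ?exceeding" by auto
  moreover have "card ?exceeding \<le> L" using card_mono[of "{..<L}" ?exceeding] by auto
  ultimately have "card ?within = L - card ?exceeding"
    by (simp add: card_Diff_subset[of _ "{..<L}"] subset_eq)
  with \<open>card ?exceeding \<le> L\<close> fewer have "real L - real S \<le> real (card ?within)"
    by (simp add: of_nat_diff)
  then have "(real L - real S) / real L \<le> real (card ?within) / real L"
    by (rule divide_right_mono) simp
  then have "1 - real S / real L \<le> real (card ?within) / real L"
    using L_pos by (simp add: diff_divide_distrib)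
  then show ?thesis using Min_le[OF ks] fewer by (simp add: Let_def n_def)
qed

end
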